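(* For every $x\in\Pi[N]$ and every $k\in\mathbb Z$, $$x[k]=\frac12\sum_{\mu=0}^{1}\sum_{l=0}^{N/2-1}\Big(y^{\mu}[l]\,\psi_{[1],\mu}[k-2l]+c^{\mu}[l]\,\varphi_{[1],\mu}[k-2l]\Big),$$ where $y^{\mu}[l]=\langle x,\psi_{[1],\mu}[\cdot-2l]\rangle$ and $c^{\mu}[l]=\langle x,\varphi_{[1],\mu}[\cdot-2l]\rangle$. Consequently the system $\{\psi_{[1],\mu}[\cdot-2l]\}\cup\{\varphi_{[1],\mu}[\cdot-2l]\}$ ($\mu\in\{0,1\}$, $0\le l<N/2$) is a tight frame of $\Pi[N]$ with frame bound $2$.
   Context: Let $N=2^{J}$ with $J\ge 1$ an integer and $\omega=e^{2\pi i/N}$. $\Pi[N]$ denotes the real vector space of real-valued $N$-periodic sequences $x=\{x[k]\}_{k\in\mathbb Z}$, with inner product $\langle x,y\rangle=\sum_{k=0}^{N-1}x[k]y[k]$. The DFT of an $N$-periodic sequence is $\hat x[n]=\sum_{k=0}^{N-1}x[k]\omega^{-kn}$, with inverse $x[k]=\frac1N\sum_{n=0}^{N-1}\hat x[n]\omega^{kn}$. Fix an integer $r\ge1$; let $U[n]=\tfrac12\big(\cos^{4r}\tfrac{\pi n}{N}+\sin^{4r}\tfrac{\pi n}{N}\big)$, $\beta[n]=\cos^{2r}\tfrac{\pi n}{N}/\sqrt{U[n]}$, $\alpha[n]=\omega^{n}\sin^{2r}\tfrac{\pi n}{N}/\sqrt{U[n]}$. The first-level wavelet packets $\psi_{[1],0},\psi_{[1],1}\in\Pi[N]$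 have DFTs $\hat\psi_{[1],0}=\beta$, $\hat\psi_{[1],1}=\alpha$. Known fact (may be assumed): $\{\psi_{[1],\mu}[\cdot-2l]:\mu\in\{0,1\},\,0\le l<N/2\}$ is an orthonormal basis of $\Pi[N]$. The complementary wavelet packets $\varphi_{[1],\mu}\in\Pi[N]$ have DFT $\hat\varphi_{[1],\mu}[n]=-i\hat\psi_{[1],\mu}[n]$ for $0<n<N/2$, $=i\hat\psi_{[1],\mu}[n]$ for $N/2<n<N$, and $=\hat\psi_{[1],\mu}[n]$ for $n\in\{0,N/2\}$ (indices mod $N$). *)

theory Defs
  imports "HOL-Analysis.Analysis"
begin

definition PiN :: "nat \<Rightarrow> (int \<Rightarrow> real) set" where
  "PiN N = {x. \<forall>k. x (k + int N) = x k}"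

definition ip :: "nat \<Rightarrow> (int \<Rightarrow> real) \<Rightarrow> (int \<Rightarrow> real) \<Rightarrow> real" where
  "ip N x y = (\<Sum>k\<in>{0..<int N}. x k * y k)"

definition omega :: "nat \<Rightarrow> complex" where
  "omega N = cis (2 * pi / real N)"

definition idft :: "nat \<Rightarrow> (int \<Rightarrow> complex) \<Rightarrow> int \<Rightarrow> complex" where
  "idft N X k = (1 / of_nat N) * (\<Sum>n\<in>{0..<int N}. X n * omega N powi (k * n))"

definition Ufun :: "nat \<Rightarrow> nat \<Rightarrow> int \<Rightarrow> real" where
  "Ufun r N n = (1/2) * (cos (pi * real_of_int n / real N) ^ (4*r)
                       + sin (pi * real_of_int n / real N) ^ (4*r))"

definition betaf :: "nat \<Rightarrow> nat \<Rightarrow> int \<Rightarrow> complex" where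
  "betaf r N n = complex_of_real (cos (pi * real_of_int n / real N) ^ (2*r) / sqrt (Ufun r N n))"

definition alphaf :: "nat \<Rightarrow> nat \<Rightarrow> int \<Rightarrow> complex" where
  "alphaf r N n = omega N powi n *
     complex_of_real (sin (pi * real_of_int n / real N) ^ (2*r) / sqrt (Ufun r N n))"

definition psi_hat :: "nat \<Rightarrow> nat \<Rightarrow> nat \<Rightarrow> int \<Rightarrow> complex" where
  "psi_hat r N \<mu> = (if \<mu> = 0 then betaf r N else alphaf r N)"

definition phi_hat :: "nat \<Rightarrow> nat \<Rightarrow> nat \<Rightarrow> int \<Rightarrow> complex" where
  "phi_hat r N \<mu> n =
     (let m = n mod int N in
      if 0 < m \<and> 2 * m < int N then - \<i> * psi_hat r N \<mu> n
      else if int N < 2 * m then \<i> * psi_hat r N \<mu> n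
      else psi_hat r N \<mu> n)"

text \<open>The packets are real-valued sequences; we take the real part of the inverse DFT
  (the inverse DFT is real by the conjugate symmetry of the DFTs).\<close>
definition psi1 :: "nat \<Rightarrow> nat \<Rightarrow> nat \<Rightarrow> int \<Rightarrow> real" where
  "psi1 r N \<mu> k = Re (idft N (psi_hat r N \<mu>) k)"

definition phi1 :: "nat \<Rightarrow> nat \<Rightarrow> nat \<Rightarrow> int \<Rightarrow> real" where
  "phi1 r N \<mu> k = Re (idft N (phi_hat r N \<mu>) k)"

definition shift2 :: "(int \<Rightarrow> real) \<Rightarrow> int \<Rightarrow> int \<Rightarrow> real" where
  "shift2 f l = (\<lambda>k. f (k - 2 * l))"

end

theory Submission
  imports Defs "HOL-Library.Real_Mod"
begin

(* For real sequences g_mu = Re (idft X_mu) the kernel sum_mu sum_l g_mu(j - 2l) g_mu(k - 2l)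
   is computed on the DFT side: summing over the even shifts aliases frequency n with n + N/2,
   so the kernel is the N-periodic delta at j - k as soon as
     sum_mu |X_mu(n)|^2 = 2   and   sum_mu X_mu(n) cnj(X_mu(n + N/2)) = 0.
   A reproducing kernel gives the expansion of every periodic x and, pairing with x, Parseval's
   identity. For beta, alpha the first condition is cos^4r + sin^4r = 2U; the half-period shift
   swaps cos and sin while omega^n changes sign, which gives the second. The complementary
   packets multiply the DFTs by a unimodular Hermitian symbol, which preserves both conditions.
   Averaging the two expansions yields the tight frame with bound 2. *)

definition unit_root :: "nat \<Rightarrow> int \<Rightarrow> complex" where
  "unit_root N a = cis (2 * pi * of_int a / real N)"

lemma omega_powi_eq_unit_root: "omega N powi a = unit_root N a"
  unfolding omega_def unit_root_def cis_power_int by (simp add: field_simps)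

lemma unit_root_add: "unit_root N (a + b) = unit_root N a * unit_root N b"
  unfolding unit_root_def cis_mult by (simp add: add_divide_distrib distrib_left)

lemma cnj_unit_root: "cnj (unit_root N a) = unit_root N (- a)"
  unfolding unit_root_def cis_cnj by simp

lemma unit_root_mult_cnj [simp]: "unit_root N a * cnj (unit_root N a) = 1"
  unfolding unit_root_def cis_cnj cis_mult by simp

lemma unit_root_eq_1_iff:
  assumes "N > 0"
  shows "unit_root N a = 1 \<longleftrightarrow> int N dvd a"
proof
  assume "unit_root N a = 1"
  then obtain n where "2 * pi * of_int a / real N = of_int n * (2 * pi)"
    unfolding unit_root_def cis_eq_1_iff by blast
  hence "real_of_int a = real_of_int (n * int N)" using assms by (simp add: field_simps)
  thus "int N dvd a" by (simp only: of_int_eq_iff) simp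
next
  assume "int N dvd a"
  then obtain q where "a = int N * q" by blast
  hence "2 * pi * of_int a / real N = 2 * pi * of_int q" using assms by simp
  thus "unit_root N a = 1" unfolding unit_root_def by simp
qed

lemma unit_root_period: "N > 0 \<Longrightarrow> unit_root N (a + b * int N) = unit_root N a"
  using unit_root_eq_1_iff[of N "b * int N"] by (simp add: unit_root_add)

lemma unit_root_double: "M > 0 \<Longrightarrow> unit_root (2 * M) (2 * a) = unit_root M a"
  unfolding unit_root_def by (simp add: field_simps)

lemma unit_root_half: "M > 0 \<Longrightarrow> unit_root (2 * M) (int M) = -1"
  unfolding unit_root_def by simp

lemma sum_unit_root:
  assumes "K > 0"
  shows "(\<Sum>l\<in>{0..<int K}. unit_root K (l * d)) = (if int K dvd d then of_nat K else 0)"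
proof -
  define w where "w = unit_root K d"
  have "{0..<int K} = int ` {..<K}"
    using image_int_atLeastLessThan[of 0 K] by (simp add: atLeast0LessThan)
  hence "(\<Sum>l\<in>{0..<int K}. unit_root K (l * d)) = (\<Sum>i<K. unit_root K (int i * d))"
    by (simp add: sum.reindex)
  also have "\<dots> = (\<Sum>i<K. w ^ i)"
  proof (intro sum.cong refl)
    fix i
    show "unit_root K (int i * d) = w ^ i"
      unfolding w_def unit_root_def Complex.DeMoivre by (simp add: field_simps)
  qed
  finally have sum_eq: "(\<Sum>l\<in>{0..<int K}. unit_root K (l * d)) = (\<Sum>i<K. w ^ i)" .
  have "w ^ K = 1"
    using assms unfolding w_def unit_root_def Complex.DeMoivre by simp
  moreover have "w = 1 \<longleftrightarrow> int K dvd d"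
    unfolding w_def by (rule unit_root_eq_1_iff[OF assms])
  ultimately show ?thesis
    using sum_eq geometric_sum[of w K] by auto
qed

definition periodic :: "nat \<Rightarrow> (int \<Rightarrow> 'a) \<Rightarrow> bool" where
  "periodic N F \<longleftrightarrow> (\<forall>k. F (k + int N) = F k)"

lemma periodic_add_mult:
  assumes "periodic N F"
  shows "F (k + b * int N) = F k"
proof (induct b rule: int_induct[where k = 0])
  case (step1 i)
  then show ?case
    using assms unfolding periodic_def by (metis add.assoc distrib_right mult_1)
next
  case (step2 i)
  then show ?case
    using assms unfolding periodic_def by (metis add.assoc diff_add_cancel distrib_right mult_1)
qed simp

lemma periodic_mod: "periodic N F \<Longrightarrow> F (k mod int N) = F k"
  using periodic_add_mult[of N F "k mod int N" "k div int N"] by (simp only: mod_div_mult_eq)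

lemma periodic_unit_root_mult:
  "N > 0 \<Longrightarrow> periodic N (\<lambda>n. unit_root N (k * n))"
  unfolding periodic_def using unit_root_period[of N] by (simp add: distrib_left mult.commute)

lemma sum_periodic_shift:
  assumes "periodic N F" "N > 0"
  shows "(\<Sum>t\<in>{0..<int N}. F (t + a)) = (\<Sum>m\<in>{0..<int N}. F m)"
proof (rule sum.reindex_bij_witness[where j = "\<lambda>t. (t + a) mod int N" and i = "\<lambda>m. (m - a) mod int N"])
  fix t assume "t \<in> {0..<int N}"
  have "((t + a) mod int N - a) mod int N = (t + a - a) mod int N" by (rule mod_diff_left_eq)
  with \<open>t \<in> {0..<int N}\<close> show "((t + a) mod int N - a) mod int N = t" by simp
  show "F ((t + a) mod int N) = F (t + a)" using periodic_mod[OF assms(1)] by simp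
next
  fix m assume "m \<in> {0..<int N}"
  then show "((m - a) mod int N + a) mod int N = m" by (simp add: mod_add_left_eq)
qed (use assms in simp_all)

lemma sum_periodic_neg:
  assumes "periodic N F" "N > 0"
  shows "(\<Sum>n\<in>{0..<int N}. F (- n)) = (\<Sum>n\<in>{0..<int N}. F n)"
proof (rule sum.reindex_bij_witness[where j = "\<lambda>n. (- n) mod int N" and i = "\<lambda>n. (- n) mod int N"])
  fix n assume "n \<in> {0..<int N}"
  then show "(- ((- n) mod int N)) mod int N = n" by (simp add: mod_minus_eq)
  show "F ((- n) mod int N) = F (- n)" using periodic_mod[OF assms(1)] by simp
qed (use assms in \<open>simp_all add: mod_minus_eq\<close>)

lemma idft_unit_root: "idft N X k = (\<Sum>n\<in>{0..<int N}. X n * unit_root N (k * n)) / of_nat N"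
  unfolding idft_def omega_powi_eq_unit_root by simp

lemma idft_mult_cnj_idft:
  "idft N X a * cnj (idft N Y b)
     = (\<Sum>n\<in>{0..<int N}. \<Sum>m\<in>{0..<int N}. X n * cnj (Y m) * unit_root N (a * n - b * m)) / (of_nat N)\<^sup>2"
proof -
  have "X n * unit_root N (a * n) * cnj (Y m * unit_root N (b * m))
          = X n * cnj (Y m) * unit_root N (a * n - b * m)" for n m
    by (simp add: cnj_unit_root unit_root_add[symmetric])
  then have "(\<Sum>n\<in>{0..<int N}. X n * unit_root N (a * n)) * cnj (\<Sum>m\<in>{0..<int N}. Y m * unit_root N (b * m))
      = (\<Sum>n\<in>{0..<int N}. \<Sum>m\<in>{0..<int N}. X n * cnj (Y m) * unit_root N (a * n - b * m))"
    by (simp only: cnj_sum sum_product)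
  then show ?thesis
    unfolding idft_unit_root complex_cnj_divide by (simp add: power2_eq_square)
qed

lemma sum_unit_root_even:
  "M > 0 \<Longrightarrow> (\<Sum>l\<in>{0..<int M}. unit_root (2 * M) (2 * l * d)) = (if int M dvd d then of_nat M else 0)"
  using sum_unit_root[of M d] by (simp add: unit_root_double mult.assoc)

lemma sum_periodic_aliased:
  fixes F :: "int \<Rightarrow> complex"
  assumes M: "M > 0" and F: "periodic (2 * M) F"
  shows "(\<Sum>m\<in>{0..<2 * int M}. F m * (if int M dvd (m - n) then of_nat M else 0))
           = of_nat M * (F n + F (n + int M))"
proof -
  define Q where "Q m = F m * (if int M dvd (m - n) then of_nat M else 0)" for m
  have "int M dvd (m + int (2 * M) - n) \<longleftrightarrow> int M dvd (m - n)" for m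
    using dvd_add_times_triv_right_iff[of "int M" "m - n" 2] by (simp add: algebra_simps)
  with F have "periodic (2 * M) Q"
    unfolding periodic_def Q_def by simp
  then have "(\<Sum>m\<in>{0..<2 * int M}. Q m) = (\<Sum>t\<in>{0..<2 * int M}. Q (t + n))"
    using sum_periodic_shift[of "2 * M" Q n] M by simp
  also have "\<dots> = (\<Sum>t\<in>{0, int M}. Q (t + n))"
  proof (rule sum.mono_neutral_right)
    show "\<forall>t\<in>{0..<2 * int M} - {0, int M}. Q (t + n) = 0"
    proof
      fix t assume t: "t \<in> {0..<2 * int M} - {0, int M}"
      show "Q (t + n) = 0"
      proof (cases "int M dvd t")
        case True
        then obtain q where q: "t = int M * q" by blast
        with t M have "q = 0 \<or> q = 1"
          by (auto simp: zero_le_mult_iff)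
        with t q show ?thesis by auto
      qed (simp add: Q_def)
    qed
  qed (use M in auto)
  also have "\<dots> = of_nat M * (F n + F (n + int M))"
    using M unfolding Q_def by (simp add: algebra_simps)
  finally show ?thesis unfolding Q_def .
qed

lemma sum_idft_shift2_mult_cnj:
  fixes X :: "int \<Rightarrow> complex"
  assumes M: "M > 0" and N: "N = 2 * M" and X: "periodic N X"
  shows "(\<Sum>l\<in>{0..<int M}. idft N X (j - 2 * l) * cnj (idft N X (k - 2 * l)))
    = of_nat M / (of_nat N)\<^sup>2 * (\<Sum>n\<in>{0..<int N}. X n * unit_root N (j * n) *
        (cnj (X n) * unit_root N (- (k * n)) + cnj (X (n + int M)) * unit_root N (- (k * (n + int M)))))"
proof -
  define F where "F m = cnj (X m) * unit_root N (- (k * m))" for m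
  have F: "periodic N F"
    using X periodic_unit_root_mult[of N "- k"] M N unfolding periodic_def F_def by simp
  have "idft N X (j - 2 * l) * cnj (idft N X (k - 2 * l))
      = (\<Sum>n\<in>{0..<int N}. \<Sum>m\<in>{0..<int N}. X n * unit_root N (j * n) * F m * unit_root N (2 * l * (m - n)))
        / (of_nat N)\<^sup>2" for l
  proof -
    have "unit_root N ((j - 2 * l) * n - (k - 2 * l) * m)
        = unit_root N (j * n) * unit_root N (- (k * m)) * unit_root N (2 * l * (m - n))" for n m
      unfolding unit_root_add[symmetric] by (simp add: algebra_simps)
    then show ?thesis
      unfolding idft_mult_cnj_idft F_def by (simp add: ac_simps)
  qed
  then have "(\<Sum>l\<in>{0..<int M}. idft N X (j - 2 * l) * cnj (idft N X (k - 2 * l)))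
      = (\<Sum>n\<in>{0..<int N}. \<Sum>m\<in>{0..<int N}. X n * unit_root N (j * n) * F m
           * (\<Sum>l\<in>{0..<int M}. unit_root N (2 * l * (m - n)))) / (of_nat N)\<^sup>2"
    by (simp add: sum_divide_distrib[symmetric] sum_distrib_left sum.swap[of _ "{0..<int M}"])
  also have "\<dots> = (\<Sum>n\<in>{0..<int N}. X n * unit_root N (j * n)
      * (\<Sum>m\<in>{0..<int N}. F m * (if int M dvd (m - n) then of_nat M else 0))) / (of_nat N)\<^sup>2"
    using sum_unit_root_even[OF M] by (simp add: N sum_distrib_left mult.assoc)
  also have "\<dots> = (\<Sum>n\<in>{0..<int N}. X n * unit_root N (j * n) * (of_nat M * (F n + F (n + int M))))
      / (of_nat N)\<^sup>2"
    using sum_periodic_aliased[OF M] F N by simp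
  finally show ?thesis
    unfolding F_def by (simp add: sum_distrib_left sum_divide_distrib ac_simps)
qed

lemma idft_real_if_hermitian:
  fixes X :: "int \<Rightarrow> complex"
  assumes X: "periodic N X" and herm: "\<And>n. X (- n) = cnj (X n)" and N: "N > 0"
  shows "idft N X k \<in> \<real>"
proof -
  define G where "G n = X n * unit_root N (k * n)" for n
  have "periodic N G"
    using X periodic_unit_root_mult[OF N, of k] unfolding periodic_def G_def by simp
  then have "cnj (idft N X k) = (\<Sum>n\<in>{0..<int N}. G (- n)) / of_nat N"
    unfolding idft_unit_root G_def by (simp add: herm cnj_unit_root)
  also have "\<dots> = (\<Sum>n\<in>{0..<int N}. G n) / of_nat N"
    by (simp only: sum_periodic_neg[OF \<open>periodic N G\<close> N])
  also have "\<dots> = idft N X k"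
    unfolding idft_unit_root G_def ..
  finally show ?thesis by (simp add: Reals_cnj_iff)
qed

(* M is the half period: the rows (X_mu(n), X_mu(n + M)) of the modulation matrix are
   orthogonal with squared norm 2. *)
definition orthonormal_dft_pair :: "nat \<Rightarrow> nat \<Rightarrow> (nat \<Rightarrow> int \<Rightarrow> complex) \<Rightarrow> bool" where
  "orthonormal_dft_pair N M X \<longleftrightarrow>
     (\<forall>\<mu>. periodic N (X \<mu>)) \<and> (\<forall>\<mu> n. X \<mu> (- n) = cnj (X \<mu> n)) \<and>
     (\<forall>n. X 0 n * cnj (X 0 n) + X 1 n * cnj (X 1 n) = 2) \<and>
     (\<forall>n. X 0 n * cnj (X 0 (n + int M)) + X 1 n * cnj (X 1 (n + int M)) = 0)"

lemma sum_two: "(\<Sum>\<mu>\<in>{0..<2::nat}. f \<mu>) = f 0 + f 1"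
  by (simp add: numeral_2_eq_2 atLeast0LessThan)

lemma orthonormal_dft_pair_sum_idft_shift2_mult_cnj:
  assumes M: "M > 0" and N: "N = 2 * M" and X: "orthonormal_dft_pair N M X"
  shows "(\<Sum>\<mu>\<in>{0..<2::nat}. \<Sum>l\<in>{0..<int M}. idft N (X \<mu>) (j - 2 * l) * cnj (idft N (X \<mu>) (k - 2 * l)))
      = of_nat M / (of_nat N)\<^sup>2 * (\<Sum>n\<in>{0..<int N}. 2 * unit_root N (n * (j - k)))"
proof -
  define T where "T \<mu> n = X \<mu> n * unit_root N (j * n) * (cnj (X \<mu> n) * unit_root N (- (k * n))
      + cnj (X \<mu> (n + int M)) * unit_root N (- (k * (n + int M))))" for \<mu> n
  have "T 0 n + T 1 n = 2 * unit_root N (n * (j - k))" for n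
  proof -
    have "X 0 n * cnj (X 0 n) + X 1 n * cnj (X 1 n) = 2"
      and "X 0 n * cnj (X 0 (n + int M)) + X 1 n * cnj (X 1 (n + int M)) = 0"
      using X unfolding orthonormal_dft_pair_def by blast+
    moreover have "T 0 n + T 1 n
        = unit_root N (j * n) * unit_root N (- (k * n)) * (X 0 n * cnj (X 0 n) + X 1 n * cnj (X 1 n))
          + unit_root N (j * n) * unit_root N (- (k * (n + int M)))
            * (X 0 n * cnj (X 0 (n + int M)) + X 1 n * cnj (X 1 (n + int M)))"
      unfolding T_def by (simp add: algebra_simps)
    moreover have "unit_root N (j * n) * unit_root N (- (k * n)) = unit_root N (n * (j - k))"
      unfolding unit_root_add[symmetric] by (simp add: algebra_simps)
    ultimately show ?thesis by simp
  qed
  moreover have "periodic N (X \<mu>)" for \<mu>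
    using X unfolding orthonormal_dft_pair_def by blast
  ultimately show ?thesis
    by (simp only: sum_two sum_idft_shift2_mult_cnj[OF M N] T_def[symmetric]
        distrib_left[symmetric] sum.distrib[symmetric])
qed

lemma orthonormal_dft_pair_kernel:
  assumes M: "M > 0" and N: "N = 2 * M" and X: "orthonormal_dft_pair N M X"
    and g: "\<And>\<mu> k. g \<mu> k = Re (idft N (X \<mu>) k)"
  shows "(\<Sum>\<mu>\<in>{0..<2::nat}. \<Sum>l\<in>{0..<int M}. g \<mu> (j - 2 * l) * g \<mu> (k - 2 * l))
           = (if int N dvd (j - k) then 1 else 0)"
proof -
  have N0: "N > 0" using M N by simp
  have "idft N (X \<mu>) q \<in> \<real>" for \<mu> q
    using X N0 by (intro idft_real_if_hermitian) (auto simp: orthonormal_dft_pair_def)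
  then have "g \<mu> a * g \<mu> b = Re (idft N (X \<mu>) a * cnj (idft N (X \<mu>) b))" for \<mu> a b
    by (simp add: g complex_is_Real_iff)
  then have "(\<Sum>\<mu>\<in>{0..<2::nat}. \<Sum>l\<in>{0..<int M}. g \<mu> (j - 2 * l) * g \<mu> (k - 2 * l))
      = Re (\<Sum>\<mu>\<in>{0..<2::nat}. \<Sum>l\<in>{0..<int M}. idft N (X \<mu>) (j - 2 * l) * cnj (idft N (X \<mu>) (k - 2 * l)))"
    by (simp add: Re_sum)
  also have "\<dots> = Re (of_nat M / (of_nat N)\<^sup>2 * (\<Sum>n\<in>{0..<int N}. 2 * unit_root N (n * (j - k))))"
    by (simp only: orthonormal_dft_pair_sum_idft_shift2_mult_cnj[OF M N X])
  also have "(\<Sum>n\<in>{0..<int N}. 2 * unit_root N (n * (j - k)))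
      = 2 * (if int N dvd (j - k) then of_nat N else 0)"
    using sum_unit_root[OF N0, of "j - k"] by (simp add: sum_distrib_left[symmetric])
  finally show ?thesis
    using M N by (simp add: power2_eq_square)
qed

lemma expansion_from_reproducing_kernel:
  fixes g :: "'i \<Rightarrow> int \<Rightarrow> real"
  assumes K: "\<And>j k. (\<Sum>i\<in>I. g i j * g i k) = (if int N dvd (j - k) then 1 else 0)"
    and x: "periodic N x" and N: "N > 0"
  shows "(\<Sum>i\<in>I. ip N x (g i) * g i k) = x k"
proof -
  have "(\<Sum>i\<in>I. ip N x (g i) * g i k) = (\<Sum>j\<in>{0..<int N}. x j * (\<Sum>i\<in>I. g i j * g i k))"
    unfolding ip_def by (simp add: sum_distrib_left sum_distrib_right sum.swap[of _ I] mult.assoc)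
  also have "\<dots> = (\<Sum>j\<in>{0..<int N}. if j = k mod int N then x j else 0)"
  proof (rule sum.cong[OF refl])
    fix j assume "j \<in> {0..<int N}"
    then have "int N dvd (j - k) \<longleftrightarrow> j = k mod int N"
      by (simp add: mod_eq_dvd_iff[symmetric])
    then show "x j * (\<Sum>i\<in>I. g i j * g i k) = (if j = k mod int N then x j else 0)"
      by (simp add: K)
  qed
  also have "\<dots> = x k"
    using N by (simp add: periodic_mod[OF x])
  finally show ?thesis .
qed

lemma parseval_from_expansion:
  fixes g :: "'i \<Rightarrow> int \<Rightarrow> real"
  assumes expansion: "\<And>k. (\<Sum>i\<in>I. ip N x (g i) * g i k) = x k"
  shows "(\<Sum>i\<in>I. (ip N x (g i))\<^sup>2) = ip N x x"
proof -
  have "(\<Sum>i\<in>I. (ip N x (g i))\<^sup>2) = (\<Sum>i\<in>I. \<Sum>k\<in>{0..<int N}. x k * (ip N x (g i) * g i k))"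
    unfolding power2_eq_square by (subst (2) ip_def) (simp add: sum_distrib_left ac_simps)
  also have "\<dots> = (\<Sum>k\<in>{0..<int N}. \<Sum>i\<in>I. x k * (ip N x (g i) * g i k))"
    by (rule sum.swap)
  also have "\<dots> = (\<Sum>k\<in>{0..<int N}. x k * x k)"
    by (simp only: sum_distrib_left[symmetric] expansion)
  finally show ?thesis unfolding ip_def .
qed

lemma orthonormal_dft_pair_parseval_frame:
  assumes M: "M > 0" and N: "N = 2 * M" and X: "orthonormal_dft_pair N M X"
    and g: "\<And>\<mu> k. g \<mu> k = Re (idft N (X \<mu>) k)" and x: "x \<in> PiN N"
  shows "(\<Sum>\<mu>\<in>{0..<2::nat}. \<Sum>l\<in>{0..<int M}. ip N x (shift2 (g \<mu>) l) * g \<mu> (k - 2 * l)) = x k"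
    and "(\<Sum>\<mu>\<in>{0..<2::nat}. \<Sum>l\<in>{0..<int M}. (ip N x (shift2 (g \<mu>) l))\<^sup>2) = ip N x x"
proof -
  define h where "h = (\<lambda>(\<mu>, l). shift2 (g \<mu>) l)"
  define I where "I = {0..<2::nat} \<times> {0..<int M}"
  have nested: "(\<Sum>\<mu>\<in>{0..<2::nat}. \<Sum>l\<in>{0..<int M}. F (shift2 (g \<mu>) l)) = (\<Sum>i\<in>I. F (h i))"
    for F :: "(int \<Rightarrow> real) \<Rightarrow> real"
    unfolding I_def h_def by (simp add: sum.cartesian_product split_def)
  have "(\<Sum>i\<in>I. h i j * h i k) = (if int N dvd (j - k) then 1 else 0)" for j k
    using nested[of "\<lambda>f. f j * f k"] orthonormal_dft_pair_kernel[OF M N X g]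
    by (simp add: shift2_def)
  moreover have "periodic N x" "N > 0"
    using x M N unfolding PiN_def periodic_def by simp_all
  ultimately have expansion: "(\<Sum>i\<in>I. ip N x (h i) * h i k) = x k" for k
    by (rule expansion_from_reproducing_kernel)
  then show "(\<Sum>\<mu>\<in>{0..<2::nat}. \<Sum>l\<in>{0..<int M}. ip N x (shift2 (g \<mu>) l) * g \<mu> (k - 2 * l)) = x k"
    using nested[of "\<lambda>f. ip N x f * f k"] by (simp add: shift2_def)
  show "(\<Sum>\<mu>\<in>{0..<2::nat}. \<Sum>l\<in>{0..<int M}. (ip N x (shift2 (g \<mu>) l))\<^sup>2) = ip N x x"
    using nested[of "\<lambda>f. (ip N x f)\<^sup>2"] parseval_from_expansion[OF expansion] by simp
qed

definition cos_weight :: "nat \<Rightarrow> real \<Rightarrow> real" where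
  "cos_weight r t = cos t ^ (2 * r) / sqrt ((cos t ^ (4 * r) + sin t ^ (4 * r)) / 2)"

definition sin_weight :: "nat \<Rightarrow> real \<Rightarrow> real" where
  "sin_weight r t = sin t ^ (2 * r) / sqrt ((cos t ^ (4 * r) + sin t ^ (4 * r)) / 2)"

lemma cos_pow_plus_sin_pow_pos:
  fixes t :: real
  assumes "r \<ge> 1"
  shows "cos t ^ (4 * r) + sin t ^ (4 * r) > 0"
proof -
  have "cos t ^ (4 * r) = (cos t ^ 2) ^ (2 * r)" "sin t ^ (4 * r) = (sin t ^ 2) ^ (2 * r)"
    by (simp_all flip: power_mult add: mult.commute)
  moreover have "cos t \<noteq> 0 \<or> sin t \<noteq> 0"
    by (metis add_0 power_zero_numeral sin_cos_squared_add zero_neq_one)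
  ultimately show ?thesis
    using assms by (auto intro: add_pos_nonneg add_nonneg_pos)
qed

lemma cos_weight_sq_plus_sin_weight_sq:
  assumes "r \<ge> 1"
  shows "(cos_weight r t)\<^sup>2 + (sin_weight r t)\<^sup>2 = 2"
proof -
  define S where "S = cos t ^ (4 * r) + sin t ^ (4 * r)"
  have "S > 0" unfolding S_def by (rule cos_pow_plus_sin_pow_pos[OF assms])
  moreover have "(cos t ^ (2 * r))\<^sup>2 + (sin t ^ (2 * r))\<^sup>2 = S"
    unfolding S_def by (simp flip: power_mult add: mult.commute)
  ultimately show ?thesis
    unfolding cos_weight_def sin_weight_def S_def[symmetric]
    by (simp add: power_divide field_simps)
qed

lemma cos_weight_add_pi: "cos_weight r (t + pi) = cos_weight r t"
  and sin_weight_add_pi: "sin_weight r (t + pi) = sin_weight r t"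
  and cos_weight_minus: "cos_weight r (- t) = cos_weight r t"
  and sin_weight_minus: "sin_weight r (- t) = sin_weight r t"
  and cos_weight_add_pi_half: "cos_weight r (t + pi / 2) = sin_weight r t"
  and sin_weight_add_pi_half: "sin_weight r (t + pi / 2) = cos_weight r t"
  unfolding cos_weight_def sin_weight_def by (simp_all add: cos_add sin_add add.commute)

lemma betaf_eq_cos_weight: "betaf r N n = of_real (cos_weight r (pi * of_int n / real N))"
  unfolding betaf_def cos_weight_def Ufun_def by simp

lemma alphaf_eq_sin_weight: "alphaf r N n = unit_root N n * of_real (sin_weight r (pi * of_int n / real N))"
  unfolding alphaf_def sin_weight_def Ufun_def omega_powi_eq_unit_root by simp

lemma orthonormal_dft_pair_psi_hat:
  assumes r: "r \<ge> 1" and M: "M > 0" and N: "N = 2 * M"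
  shows "orthonormal_dft_pair N M (psi_hat r N)"
proof -
  define t where "t n = pi * of_int n / real N" for n
  have t_period: "t (n + int N) = t n + pi"
    and t_half: "t (n + int M) = t n + pi / 2"
    and t_minus: "t (- n) = - t n" for n
    using M N unfolding t_def by (simp_all add: field_simps)
  have e_period: "unit_root N (n + int N) = unit_root N n"
    and e_half: "unit_root N (n + int M) = - unit_root N n" for n
    using unit_root_period[of N n 1] unit_root_half[OF M] M N by (simp_all add: unit_root_add)
  have beta: "betaf r N n = of_real (cos_weight r (t n))"
    and alpha: "alphaf r N n = unit_root N n * of_real (sin_weight r (t n))" for n
    unfolding t_def by (rule betaf_eq_cos_weight alphaf_eq_sin_weight)+
  have psi_0: "psi_hat r N 0 = betaf r N" and psi_1: "psi_hat r N 1 = alphaf r N"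
    unfolding psi_hat_def by simp_all
  show ?thesis
    unfolding orthonormal_dft_pair_def
  proof (intro conjI allI)
    fix \<mu>
    show "periodic N (psi_hat r N \<mu>)"
      by (simp add: psi_hat_def periodic_def beta alpha t_period e_period
          cos_weight_add_pi sin_weight_add_pi)
    fix n
    show "psi_hat r N \<mu> (- n) = cnj (psi_hat r N \<mu> n)"
      by (simp add: psi_hat_def beta alpha t_minus cos_weight_minus sin_weight_minus cnj_unit_root)
  next
    fix n
    have "betaf r N n * cnj (betaf r N n) + alphaf r N n * cnj (alphaf r N n)
        = of_real ((cos_weight r (t n))\<^sup>2 + (sin_weight r (t n))\<^sup>2)"
      unfolding beta alpha by (simp add: power2_eq_square algebra_simps)
    then show "psi_hat r N 0 n * cnj (psi_hat r N 0 n) + psi_hat r N 1 n * cnj (psi_hat r N 1 n) = 2"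
      unfolding psi_0 psi_1 using cos_weight_sq_plus_sin_weight_sq[OF r] by simp
  next
    fix n
    have "cos_weight r (t n) * sin_weight r (t n)
        - unit_root N n * cnj (unit_root N n) * sin_weight r (t n) * cos_weight r (t n) = 0"
      by simp
    then show "psi_hat r N 0 n * cnj (psi_hat r N 0 (n + int M))
        + psi_hat r N 1 n * cnj (psi_hat r N 1 (n + int M)) = 0"
      unfolding psi_0 psi_1 beta alpha t_half e_half
      by (simp add: cos_weight_add_pi_half sin_weight_add_pi_half algebra_simps)
  qed
qed

(* The DFT symbol -i sgn of the discrete Hilbert transform, set to 1 at 0 and N/2. *)
definition hilbert_multiplier :: "nat \<Rightarrow> int \<Rightarrow> complex" where
  "hilbert_multiplier N n =
     (let m = n mod int N in if 0 < m \<and> 2 * m < int N then - \<i> else if int N < 2 * m then \<i> else 1)"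

lemma phi_hat_eq_hilbert_multiplier: "phi_hat r N \<mu> n = hilbert_multiplier N n * psi_hat r N \<mu> n"
  unfolding phi_hat_def hilbert_multiplier_def by (simp add: Let_def)

lemma periodic_hilbert_multiplier: "periodic N (hilbert_multiplier N)"
  unfolding periodic_def hilbert_multiplier_def by simp

lemma hilbert_multiplier_mult_cnj: "hilbert_multiplier N n * cnj (hilbert_multiplier N n) = 1"
  unfolding hilbert_multiplier_def by (simp add: Let_def)

lemma hilbert_multiplier_minus:
  assumes "N > 0"
  shows "hilbert_multiplier N (- n) = cnj (hilbert_multiplier N n)"
proof -
  define m where "m = n mod int N"
  have "0 \<le> m" "m < int N"
    using assms unfolding m_def by simp_all
  moreover have "(- n) mod int N = (if m = 0 then 0 else int N - m)"
    unfolding m_def by (rule zmod_zminus1_eq_if)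
  ultimately show ?thesis
    unfolding hilbert_multiplier_def Let_def m_def[symmetric] by auto
qed

lemma orthonormal_dft_pair_mult:
  assumes X: "orthonormal_dft_pair N M X" and h: "periodic N h"
    and unimodular: "\<And>n. h n * cnj (h n) = 1" and herm: "\<And>n. h (- n) = cnj (h n)"
  shows "orthonormal_dft_pair N M (\<lambda>\<mu> n. h n * X \<mu> n)"
  unfolding orthonormal_dft_pair_def
proof (intro conjI allI)
  fix \<mu> n
  show "periodic N (\<lambda>n. h n * X \<mu> n)"
    using X h unfolding orthonormal_dft_pair_def periodic_def by simp
  show "h (- n) * X \<mu> (- n) = cnj (h n * X \<mu> n)"
    using X herm unfolding orthonormal_dft_pair_def by simp
next
  fix n
  have "h n * X 0 n * cnj (h n * X 0 n) + h n * X 1 n * cnj (h n * X 1 n)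
      = h n * cnj (h n) * (X 0 n * cnj (X 0 n) + X 1 n * cnj (X 1 n))"
    by (simp add: algebra_simps)
  then show "h n * X 0 n * cnj (h n * X 0 n) + h n * X 1 n * cnj (h n * X 1 n) = 2"
    using X unimodular unfolding orthonormal_dft_pair_def by simp
  have "h n * X 0 n * cnj (h (n + int M) * X 0 (n + int M)) + h n * X 1 n * cnj (h (n + int M) * X 1 (n + int M))
      = h n * cnj (h (n + int M)) * (X 0 n * cnj (X 0 (n + int M)) + X 1 n * cnj (X 1 (n + int M)))"
    by (simp add: algebra_simps)
  then show "h n * X 0 n * cnj (h (n + int M) * X 0 (n + int M))
      + h n * X 1 n * cnj (h (n + int M) * X 1 (n + int M)) = 0"
    using X unfolding orthonormal_dft_pair_def by simp
qed

lemma orthonormal_dft_pair_phi_hat: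
  assumes "r \<ge> 1" and "M > 0" and "N = 2 * M"
  shows "orthonormal_dft_pair N M (phi_hat r N)"
proof -
  have "orthonormal_dft_pair N M (\<lambda>\<mu> n. hilbert_multiplier N n * psi_hat r N \<mu> n)"
    using assms
    by (intro orthonormal_dft_pair_mult orthonormal_dft_pair_psi_hat periodic_hilbert_multiplier
        hilbert_multiplier_mult_cnj hilbert_multiplier_minus) simp_all
  moreover have "phi_hat r N = (\<lambda>\<mu> n. hilbert_multiplier N n * psi_hat r N \<mu> n)"
    by (simp add: fun_eq_iff phi_hat_eq_hilbert_multiplier)
  ultimately show ?thesis by simp
qed

theorem corollary4p4:
  fixes J r :: nat and N :: nat
  assumes "J \<ge> 1" and "r \<ge> 1" and "N = 2 ^ J"
  shows "(\<forall>x \<in> PiN N. \<forall>k :: int.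
            x k = (1/2) * (\<Sum>\<mu>\<in>{0..<2::nat}. \<Sum>l\<in>{0..<int N div 2}.
                    ip N x (shift2 (psi1 r N \<mu>) l) * psi1 r N \<mu> (k - 2 * l)
                  + ip N x (shift2 (phi1 r N \<mu>) l) * phi1 r N \<mu> (k - 2 * l)))
       \<and> (\<forall>x \<in> PiN N.
            (\<Sum>\<mu>\<in>{0..<2::nat}. \<Sum>l\<in>{0..<int N div 2}.
                 (ip N x (shift2 (psi1 r N \<mu>) l))\<^sup>2 + (ip N x (shift2 (phi1 r N \<mu>) l))\<^sup>2)
            = 2 * ip N x x)"
proof -
  define M where "M = (2::nat) ^ (J - 1)"
  have M: "M > 0" and N: "N = 2 * M"
    using assms(1,3) unfolding M_def by (cases J; simp)+
  have half: "int N div 2 = int M"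
    using N by simp
  have psi: "orthonormal_dft_pair N M (psi_hat r N)"
    and phi: "orthonormal_dft_pair N M (phi_hat r N)"
    using assms(2) M N by (rule orthonormal_dft_pair_psi_hat orthonormal_dft_pair_phi_hat)+
  show ?thesis
    unfolding half sum.distrib
    using orthonormal_dft_pair_parseval_frame[OF M N psi psi1_def]
      orthonormal_dft_pair_parseval_frame[OF M N phi phi1_def]
    by simp
qed

end
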